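(* Let $\phi:[0,\infty)\to\mathbb R$ be convex, differentiable and bounded below, with $\phi'(0)<0$, and let $c_{II}\in(0,1)$ and $\rho_0>0$. Consider the following interval-based bisection line search: set $\rho_L=0$, $\rho_U=\infty$, and for $i=0,1,2,\dots$: if $|\phi'(\rho_i)|\le -c_{II}\phi'(0)$, stop and output $\rho^*=\rho_i$; otherwise, if $\phi'(\rho_i)>0$ set $\rho_U=\rho_i$, and if $\phi'(\rho_i)<0$ set $\rho_L=\rho_i$; then set $\rho_{i+1}=2\rho_L$ if $\rho_U=\infty$, and $\rho_{i+1}=\frac12(\rho_L+\rho_U)$ otherwise. Then this procedure stops after finitely many iterations, and its output $\rho^*$ satisfies the strong Wolfe condition $|\phi'(\rho^* )|\le -c_{II}\phi'(0)$.
   Context: In the application, $\phi(\rho)=\mathcal F(h_t+\rho z_t)$ for a convex differentiable objective $\mathcal F$ and a descent direction $z_t$, but the statement concerns an arbitrary $\phi$ as described. *)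

theory Defs
  imports "HOL-Analysis.Analysis"
begin

text \<open>State of the bisection line search: (rho_L, rho_U, rho_i), where
  rho_U = None encodes rho_U = infinity. The function d is the derivative phi'.\<close>

definition ls_step :: "(real \<Rightarrow> real) \<Rightarrow> real \<times> real option \<times> real \<Rightarrow> real \<times> real option \<times> real" where
  "ls_step d s = (case s of (rL, rU, r) \<Rightarrow>
     (let rU' = (if d r > 0 then Some r else rU);
          rL' = (if d r < 0 then r else rL)
      in (rL', rU', (case rU' of None \<Rightarrow> 2 * rL' | Some u \<Rightarrow> (rL' + u) / 2))))"

definition ls_state :: "(real \<Rightarrow> real) \<Rightarrow> real \<Rightarrow> nat \<Rightarrow> real \<times> real option \<times> real" where
  "ls_state d rho0 i = (ls_step d ^^ i) (0, None, rho0)"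

definition ls_rho :: "(real \<Rightarrow> real) \<Rightarrow> real \<Rightarrow> nat \<Rightarrow> real" where
  "ls_rho d rho0 i = snd (snd (ls_state d rho0 i))"

definition ls_stop :: "(real \<Rightarrow> real) \<Rightarrow> real \<Rightarrow> real \<Rightarrow> nat \<Rightarrow> bool" where
  "ls_stop d c rho0 i \<longleftrightarrow> \<bar>d (ls_rho d rho0 i)\<bar> \<le> - c * d 0"

end

(*
  Write e = -c * phi'(0) > 0. As long as the upper bracket is infinite the trial steps double, and
  the search keeps doubling only while phi' < -e; but for a convex phi the tangent inequality gives
  phi(r) <= phi(0) - e * r at such r, so boundedness below ends this phase. From then on the search
  bisects an interval [l, u] with phi'(l) < -e < e < phi'(u). These intervals shrink to a point, and
  since the derivative of a differentiable convex function is continuous, phi' cannot jump there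
  from below -e to above e.
*)
theory Submission
  imports Defs
begin

(* 2 * s (2 * x - p) - s x is the slope of the secant from x to its reflection 2 * x - p. *)
lemma convex_on_deriv_between_secants:
  fixes f :: "real \<Rightarrow> real"
  assumes conv: "convex_on A f" and conn: "connected A"
    and x: "x \<in> interior A" "x \<noteq> p" and p: "p \<in> A" and t: "2 * x - p \<in> A"
    and deriv: "(f has_real_derivative D) (at x within A)"
  defines "s y \<equiv> (f y - f p) / (y - p)"
  shows "min (s x) (2 * s (2 * x - p) - s x) \<le> D \<and> D \<le> max (s x) (2 * s (2 * x - p) - s x)"
proof -
  have tangent: "f y - f x \<ge> D * (y - x)" if "y \<in> A" for y
    using convex_on_imp_above_tangent[OF conv conn x(1) that deriv] .
  have fx: "f x = f p + s x * (x - p)" and ft: "f (2 * x - p) = f p + s (2 * x - p) * (2 * (x - p))"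
    using x(2) by (simp_all add: s_def)
  have "0 \<le> (D - s x) * (x - p)"
    using tangent[OF p] fx by (simp add: algebra_simps)
  moreover have "0 \<le> (2 * s (2 * x - p) - s x - D) * (x - p)"
    using tangent[OF t] fx ft by (simp add: algebra_simps)
  ultimately show ?thesis
    using x(2) by (cases "x < p") (auto simp: zero_le_mult_iff)
qed

lemma convex_on_Ici_deriv_continuous:
  fixes f f' :: "real \<Rightarrow> real"
  assumes conv: "convex_on {a..} f"
    and deriv: "\<And>x. a \<le> x \<Longrightarrow> (f has_real_derivative f' x) (at x within {a..})"
  shows "continuous_on {a..} f'"
  unfolding continuous_on_def
proof
  fix p assume p: "p \<in> {a..}"
  define s where "s = (\<lambda>y. (f y - f p) / (y - p))"
  let ?F = "at p within {a..}"
  have s: "(s \<longlongrightarrow> f' p) ?F"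
    using deriv[of p] p by (simp add: has_field_derivative_iff s_def)
  have "eventually (\<lambda>x. p \<le> x \<or> (a + p) / 2 < x) ?F"
  proof (cases "a < p")
    case True
    have "((\<lambda>x. x) \<longlongrightarrow> p) ?F" by (rule tendsto_ident_at)
    from order_tendstoD(1)[OF this, of "(a + p) / 2"] True show ?thesis
      by (auto elim: eventually_mono)
  next
    case False
    then show ?thesis
      using p by (auto simp: eventually_at_filter)
  qed
  then have reflect_in: "eventually (\<lambda>x. x \<in> {a..} \<and> x \<noteq> p \<and> 2 * x - p \<in> {a..}) ?F"
    by (auto simp: eventually_at_filter elim: eventually_mono)
  have "filterlim (\<lambda>x. 2 * x - p) ?F ?F"
    unfolding filterlim_at
  proof
    show "eventually (\<lambda>x. 2 * x - p \<in> {a..} \<and> 2 * x - p \<noteq> p) ?F"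
      using reflect_in by (auto elim: eventually_mono)
    have "((\<lambda>x. 2 * x - p) \<longlongrightarrow> 2 * p - p) ?F"
      by (intro tendsto_intros)
    then show "((\<lambda>x. 2 * x - p) \<longlongrightarrow> p) ?F" by simp
  qed
  with s have s_reflect: "((\<lambda>x. s (2 * x - p)) \<longlongrightarrow> f' p) ?F"
    by (rule filterlim_compose)
  have "((\<lambda>x. 2 * s (2 * x - p) - s x) \<longlongrightarrow> 2 * f' p - f' p) ?F"
    by (intro tendsto_intros s s_reflect)
  then have s_extrapolated: "((\<lambda>x. 2 * s (2 * x - p) - s x) \<longlongrightarrow> f' p) ?F"
    by simp
  have lower: "((\<lambda>x. min (s x) (2 * s (2 * x - p) - s x)) \<longlongrightarrow> f' p) ?F"
    using tendsto_min[OF s s_extrapolated] by simp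
  have upper: "((\<lambda>x. max (s x) (2 * s (2 * x - p) - s x)) \<longlongrightarrow> f' p) ?F"
    using tendsto_max[OF s s_extrapolated] by simp
  have "eventually (\<lambda>x. min (s x) (2 * s (2 * x - p) - s x) \<le> f' x
      \<and> f' x \<le> max (s x) (2 * s (2 * x - p) - s x)) ?F"
    using reflect_in
  proof eventually_elim
    case (elim x)
    then have "x \<in> interior {a..}"
      using p by auto
    with elim p show ?case
      unfolding s_def
      by (intro convex_on_deriv_between_secants[OF conv] deriv) (auto simp: is_interval_connected)
  qed
  then have "eventually (\<lambda>x. min (s x) (2 * s (2 * x - p) - s x) \<le> f' x) ?F"
    and "eventually (\<lambda>x. f' x \<le> max (s x) (2 * s (2 * x - p) - s x)) ?F"
    by (auto elim: eventually_mono)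
  from this lower upper show "(f' \<longlongrightarrow> f' p) ?F"
    by (rule tendsto_sandwich)
qed

lemma convex_on_Ici_bdd_below_slope_bound:
  fixes f f' :: "real \<Rightarrow> real"
  assumes conv: "convex_on {a..} f"
    and deriv: "\<And>x. a \<le> x \<Longrightarrow> (f has_real_derivative f' x) (at x within {a..})"
    and bdd: "bdd_below (f ` {a..})" and e: "0 < e"
  obtains R where "\<And>r. a < r \<Longrightarrow> f' r \<le> - e \<Longrightarrow> r \<le> R"
proof -
  obtain B where B: "\<And>x. a \<le> x \<Longrightarrow> B \<le> f x"
    using bdd by (auto simp: bdd_below_def)
  show ?thesis
  proof
    fix r assume r: "a < r" and slope: "f' r \<le> - e"
    have "f' r * (a - r) \<le> f a - f r"
      using r by (intro convex_on_imp_above_tangent[OF conv] deriv) (auto simp: is_interval_connected)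
    moreover have "e * (r - a) \<le> - f' r * (r - a)"
      using slope r by (intro mult_right_mono) auto
    ultimately have "e * (r - a) \<le> f a - B"
      using B[of r] r by (simp add: algebra_simps)
    then show "r \<le> a + (f a - B) / e"
      using e by (simp add: field_simps)
  qed
qed

definition bisect :: "(real \<Rightarrow> real) \<Rightarrow> real \<times> real \<Rightarrow> real \<times> real" where
  "bisect d = (\<lambda>(l, u). let m = (l + u) / 2 in if 0 < d m then (l, m) else (m, u))"

lemma bisect_nested:
  assumes "bisect d (l, u) = (l', u')" "l \<le> u"
  shows "l \<le> l' \<and> l' \<le> u' \<and> u' \<le> u \<and> u' - l' = (u - l) / 2"
  using assms by (auto simp: bisect_def Let_def split: if_splits)

lemma bisect_keeps_signs:
  assumes "bisect d (l, u) = (l', u')" "d l < - e" "e < d u" "e < \<bar>d ((l + u) / 2)\<bar>"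
  shows "d l' < - e \<and> e < d u'"
  using assms by (auto simp: bisect_def Let_def split: if_splits)

lemma bisect_terminates:
  fixes d :: "real \<Rightarrow> real"
  assumes cont: "continuous_on {l..u} d" and "l \<le> u" "d l < - e" "e < d u" "0 < e"
  shows "\<exists>n a b. (bisect d ^^ n) (l, u) = (a, b) \<and> \<bar>d ((a + b) / 2)\<bar> \<le> e"
proof (rule ccontr)
  define a where "a n = fst ((bisect d ^^ n) (l, u))" for n
  define b where "b n = snd ((bisect d ^^ n) (l, u))" for n
  have iter: "(bisect d ^^ n) (l, u) = (a n, b n)" for n
    by (simp add: a_def b_def)
  assume "\<not> ?thesis"
  then have far: "e < \<bar>d ((a n + b n) / 2)\<bar>" for n
    using iter by (meson not_le)
  have step: "bisect d (a n, b n) = (a (Suc n), b (Suc n))" for n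
    using iter[of "Suc n"] by (simp add: iter)
  have nested: "l \<le> a n \<and> a n \<le> b n \<and> b n \<le> u \<and> b n - a n = (u - l) / 2 ^ n" for n
  proof (induction n)
    case 0
    show ?case using iter[of 0] \<open>l \<le> u\<close> by simp
  next
    case (Suc n)
    then show ?case using bisect_nested[OF step[of n]] by auto
  qed
  have signs: "d (a n) < - e \<and> e < d (b n)" for n
  proof (induction n)
    case 0
    show ?case using iter[of 0] assms by simp
  next
    case (Suc n)
    then show ?case using bisect_keeps_signs[OF step[of n] _ _ far[of n]] by auto
  qed
  have "(\<lambda>n. a n - b n) \<longlonglongrightarrow> 0"
  proof -
    have "(\<lambda>n. - ((u - l) / 2 ^ n)) \<longlonglongrightarrow> - 0"
      by (intro tendsto_minus LIMSEQ_divide_realpow_zero) simp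
    moreover have "a n - b n = - ((u - l) / 2 ^ n)" for n
      using nested[of n] by simp
    ultimately show ?thesis by simp
  qed
  then obtain p where p: "\<forall>n. a n \<le> p" "a \<longlonglongrightarrow> p" "\<forall>n. p \<le> b n" "b \<longlonglongrightarrow> p"
    using nested_sequence_unique[of a b] nested bisect_nested[OF step] by blast
  have "p \<in> {l..u}"
    using p(1,3) nested[of 0] by (meson atLeastAtMost_iff order.trans)
  moreover have "a n \<in> {l..u}" "b n \<in> {l..u}" for n
    using nested[of n] by auto
  ultimately have "(\<lambda>n. d (a n)) \<longlonglongrightarrow> d p" and "(\<lambda>n. d (b n)) \<longlonglongrightarrow> d p"
    by (auto intro!: continuous_on_tendsto_compose[OF cont] p always_eventually)
  then have "d p \<le> - e" and "e \<le> d p"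
    using signs by (auto intro: LIMSEQ_le_const LIMSEQ_le_const2 less_imp_le)
  then show False
    using \<open>0 < e\<close> by linarith
qed

lemma ls_state_0: "ls_state d rho0 0 = (0, None, rho0)"
  by (simp add: ls_state_def)

lemma ls_state_Suc: "ls_state d rho0 (Suc k) = ls_step d (ls_state d rho0 k)"
  by (simp add: ls_state_def)

lemma ls_step_expand: "d r < 0 \<Longrightarrow> ls_step d (l, None, r) = (r, None, 2 * r)"
  by (simp add: ls_step_def Let_def)

lemma ls_step_bracket: "0 < d r \<Longrightarrow> ls_step d (l, U, r) = (l, Some r, (l + r) / 2)"
  by (simp add: ls_step_def Let_def)

lemma ls_step_bisect:
  "d ((l + u) / 2) \<noteq> 0 \<Longrightarrow>
    ls_step d (l, Some u, (l + u) / 2) = (\<lambda>(a, b). (a, Some b, (a + b) / 2)) (bisect d (l, u))"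
  by (auto simp: ls_step_def bisect_def Let_def)

lemma ls_state_expanding:
  assumes "0 < rho0" "d 0 < - e" "0 \<le> e" "\<forall>i<k. d (ls_rho d rho0 i) < - e"
  shows "\<exists>l. ls_state d rho0 k = (l, None, 2 ^ k * rho0) \<and> 0 \<le> l \<and> l < 2 ^ k * rho0 \<and> d l < - e"
  using assms(4)
proof (induction k)
  case 0
  show ?case using assms(1,2) by (simp add: ls_state_0)
next
  case (Suc k)
  then obtain l where S: "ls_state d rho0 k = (l, None, 2 ^ k * rho0)" and "0 \<le> l" "l < 2 ^ k * rho0"
    by auto
  moreover have "d (2 ^ k * rho0) < - e"
    using Suc.prems S by (auto simp: ls_rho_def)
  ultimately show ?case
    using assms(1,3) by (auto simp: ls_state_Suc ls_step_expand)
qed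

lemma ls_state_bisection:
  assumes "ls_state d rho0 k = (l, Some u, (l + u) / 2)"
    and "\<forall>i<n. d (ls_rho d rho0 (k + i)) \<noteq> 0"
  shows "ls_state d rho0 (k + n) = (\<lambda>(a, b). (a, Some b, (a + b) / 2)) ((bisect d ^^ n) (l, u))"
  using assms(2)
proof (induction n)
  case 0
  show ?case using assms(1) by simp
next
  case (Suc n)
  obtain a b where ab: "(bisect d ^^ n) (l, u) = (a, b)" by fastforce
  with Suc have "ls_state d rho0 (k + n) = (a, Some b, (a + b) / 2)" by simp
  moreover from this have "d ((a + b) / 2) \<noteq> 0"
    using Suc.prems by (auto simp: ls_rho_def)
  ultimately show ?case
    using ab by (simp add: ls_state_Suc ls_step_bisect)
qed

lemma ls_terminates:
  fixes d :: "real \<Rightarrow> real"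
  assumes cont: "continuous_on {0..} d" and e: "0 < e" and d0: "d 0 < - e" and rho0: "0 < rho0"
    and slope: "\<And>r. 0 < r \<Longrightarrow> d r < - e \<Longrightarrow> r \<le> R"
  shows "\<exists>n. \<bar>d (ls_rho d rho0 n)\<bar> \<le> e"
proof (rule ccontr)
  assume "\<not> ?thesis"
  then have far: "e < \<bar>d (ls_rho d rho0 k)\<bar>" for k
    by (meson not_le)
  then have nonzero: "d (ls_rho d rho0 k) \<noteq> 0" for k
    using e by (metis abs_zero not_less_iff_gr_or_eq)
  show False
  proof (cases "\<exists>k. 0 < d (ls_rho d rho0 k)")
    case False
    then have nonpos: "d (ls_rho d rho0 k) \<le> 0" for k
      by (meson not_le)
    have expanding: "d (ls_rho d rho0 k) < - e" for k
      using far[of k] nonpos[of k] by linarith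
    then have doubling: "ls_rho d rho0 k = 2 ^ k * rho0" for k
      using ls_state_expanding[where d = d and e = e and k = k, OF rho0 d0] e by (auto simp: ls_rho_def)
    obtain k where "R / rho0 < 2 ^ k"
      using real_arch_pow[of 2] by auto
    then have "R < 2 ^ k * rho0"
      using rho0 by (simp add: pos_divide_less_eq)
    then show False
      using slope[of "2 ^ k * rho0"] expanding[of k] doubling[of k] rho0 by simp
  next
    case True
    define k where "k = (LEAST k. 0 < d (ls_rho d rho0 k))"
    have "d (ls_rho d rho0 i) < - e" if "i < k" for i
      using not_less_Least[OF that[unfolded k_def]] far[of i] by auto
    then obtain l where S: "ls_state d rho0 k = (l, None, 2 ^ k * rho0)"
      and l: "0 \<le> l" "l < 2 ^ k * rho0" "d l < - e"
      using ls_state_expanding[where d = d and e = e and k = k, OF rho0 d0] e by auto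
    define u where "u = 2 ^ k * rho0"
    have "0 < d u"
      using LeastI_ex[OF True] S by (simp add: k_def u_def ls_rho_def)
    then have "e < d u"
      using far[of k] S by (simp add: u_def ls_rho_def)
    have "ls_state d rho0 (Suc k) = (l, Some u, (l + u) / 2)"
      using \<open>0 < d u\<close> by (simp add: ls_state_Suc S ls_step_bracket u_def)
    then have bisection: "ls_state d rho0 (Suc k + n) =
        (\<lambda>(a, b). (a, Some b, (a + b) / 2)) ((bisect d ^^ n) (l, u))" for n
      using nonzero by (intro ls_state_bisection) auto
    have "continuous_on {l..u} d"
      using l(1) by (auto intro: continuous_on_subset[OF cont])
    then obtain n a b where "(bisect d ^^ n) (l, u) = (a, b)" "\<bar>d ((a + b) / 2)\<bar> \<le> e"
      using bisect_terminates l \<open>e < d u\<close> e unfolding u_def by (meson less_imp_le)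
    then show False
      using bisection[of n] far[of "Suc k + n"] by (simp add: ls_rho_def)
  qed
qed

theorem theorem4:
  fixes \<phi> \<phi>' :: "real \<Rightarrow> real" and c rho0 :: real
  assumes conv: "convex_on {0..} \<phi>"
    and deriv: "\<And>x. x \<ge> 0 \<Longrightarrow> (\<phi> has_real_derivative \<phi>' x) (at x within {0..})"
    and bdd: "bdd_below (\<phi> ` {0..})"
    and neg: "\<phi>' 0 < 0"
    and c: "0 < c" "c < 1"
    and rho0: "rho0 > 0"
  shows "\<exists>n. (\<forall>i<n. \<not> ls_stop \<phi>' c rho0 i) \<and> ls_stop \<phi>' c rho0 n
             \<and> \<bar>\<phi>' (ls_rho \<phi>' rho0 n)\<bar> \<le> - c * \<phi>' 0"
proof -
  define e where "e = - c * \<phi>' 0"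
  have e: "0 < e" and start: "\<phi>' 0 < - e"
    using c neg by (simp_all add: e_def mult_less_0_iff)
  obtain R where "\<And>r. 0 < r \<Longrightarrow> \<phi>' r \<le> - e \<Longrightarrow> r \<le> R"
    using convex_on_Ici_bdd_below_slope_bound[OF conv deriv bdd e] by blast
  then have "\<exists>n. ls_stop \<phi>' c rho0 n"
    using ls_terminates[OF convex_on_Ici_deriv_continuous[OF conv deriv] e start rho0, of R]
    by (force simp: ls_stop_def e_def)
  then have "ls_stop \<phi>' c rho0 (LEAST n. ls_stop \<phi>' c rho0 n)"
    and "\<forall>i < (LEAST n. ls_stop \<phi>' c rho0 n). \<not> ls_stop \<phi>' c rho0 i"
    by (auto intro: LeastI_ex dest: not_less_Least)
  then show ?thesis
    unfolding ls_stop_def by blast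
qed

end
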